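(* There exists no simple, locally finite lattice $S$ with more than two elements such that every finite sublattice of $S$ satisfies $(\mathrm{T}_\vee)$.
   Context: A lattice is simple if its only congruences are the identity and the total congruence. It is locally finite if every finitely generated sublattice is finite. For a finite lattice $A$, let $\mathrm{J}(A)$ be its set of join-irreducible elements; for $q\in\mathrm{J}(A)$ let $q_*$ be its unique lower cover. The join-dependency relation $D_A$ on $\mathrm{J}(A)$ is defined by: $p\,D_A\,q$ iff $p\neq q$ and there exists $x\in A$ with $p\leq q\vee x$ and $p\nleq q_*\vee x$. A finite lattice $A$ satisfies $(\mathrm{T}_\vee)$ if $D_A$ has no cycle. *)

theory Defs
  imports Main
begin

text \<open>Lattices are rendered by the type class lattice; the lattice S is the whole type.\<close>

definition lattice_congruence :: "('a::lattice \<times> 'a) set \<Rightarrow> bool" where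
  "lattice_congruence \<theta> \<longleftrightarrow> equiv UNIV \<theta> \<and>
     (\<forall>a b c d. (a, b) \<in> \<theta> \<and> (c, d) \<in> \<theta> \<longrightarrow>
        (sup a c, sup b d) \<in> \<theta> \<and> (inf a c, inf b d) \<in> \<theta>)"

definition simple_lattice :: "'a::lattice itself \<Rightarrow> bool" where
  "simple_lattice _ \<longleftrightarrow>
     (\<forall>\<theta>::('a \<times> 'a) set. lattice_congruence \<theta> \<longrightarrow> \<theta> = Id \<or> \<theta> = UNIV)"

definition lat_closed :: "'a::lattice set \<Rightarrow> bool" where
  "lat_closed A \<longleftrightarrow> (\<forall>x\<in>A. \<forall>y\<in>A. sup x y \<in> A \<and> inf x y \<in> A)"

definition sublattice :: "'a::lattice set \<Rightarrow> bool" where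
  "sublattice A \<longleftrightarrow> A \<noteq> {} \<and> lat_closed A"

definition gen_sublattice :: "'a::lattice set \<Rightarrow> 'a set" where
  "gen_sublattice X = \<Inter>{A. X \<subseteq> A \<and> lat_closed A}"

definition locally_finite_lattice :: "'a::lattice itself \<Rightarrow> bool" where
  "locally_finite_lattice _ \<longleftrightarrow>
     (\<forall>X::'a set. finite X \<longrightarrow> finite (gen_sublattice X))"

definition join_irreducibles :: "'a::lattice set \<Rightarrow> 'a set" where
  "join_irreducibles A = {q \<in> A. (\<exists>x\<in>A. x < q) \<and>
      (\<forall>a\<in>A. \<forall>b\<in>A. q = sup a b \<longrightarrow> q = a \<or> q = b)}"

definition lower_cover :: "'a::lattice set \<Rightarrow> 'a \<Rightarrow> 'a" where
  "lower_cover A q = (THE p. p \<in> A \<and> p < q \<and> \<not> (\<exists>z\<in>A. p < z \<and> z < q))"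

definition join_dep :: "'a::lattice set \<Rightarrow> ('a \<times> 'a) set" where
  "join_dep A = {(p, q). p \<in> join_irreducibles A \<and> q \<in> join_irreducibles A \<and> p \<noteq> q \<and>
      (\<exists>x\<in>A. p \<le> sup q x \<and> \<not> p \<le> sup (lower_cover A q) x)}"

definition T_join :: "'a::lattice set \<Rightarrow> bool" where
  "T_join A \<longleftrightarrow> acyclic (join_dep A)"

end

(* In a finite lattice A, every set P of join-irreducibles that is downward closed under
   the join-dependency relation D yields a congruence: u and v are identified when they lie
   above the same join-irreducibles outside P.  A simple lattice with three elements contains
   a chain x < y < z, and simplicity puts (y, z) into the congruence generated by (x, y) and
   vice versa.  Both derivations are finite, hence live in a finite sublattice A.  Applying
   the congruence of the D-closure of the join-irreducibles separating x from y (resp. y from z)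
   shows that each of these two disjoint nonempty sets lies in the D-closure of the other,
   which produces a D-cycle in A. *)

theory Submission
  imports Defs
begin

lemma finite_less_induct [consumes 2, case_names less]:
  fixes A :: "'a::order set"
  assumes "finite A" and "s \<in> A"
    and "\<And>s. s \<in> A \<Longrightarrow> (\<And>s'. s' \<in> A \<Longrightarrow> s' < s \<Longrightarrow> P s') \<Longrightarrow> P s"
  shows "P s"
proof -
  have "wfp_on A (<)"
    using assms(1) by (intro strict_partial_order_wfp_on_finite_set) (auto intro: transp_onI asymp_onI)
  then show ?thesis using assms(2,3) by (rule wfp_on_induct)
qed

lemma lat_closed_cases:
  fixes A :: "'a::lattice set"
  assumes "lat_closed A" and "s \<in> A"
  obtains (least) "\<forall>a\<in>A. s \<le> a"
    | (join_irreducible) "s \<in> join_irreducibles A"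
    | (join) a b where "a \<in> A" "b \<in> A" "a < s" "b < s" "s = sup a b"
proof (cases "s \<in> join_irreducibles A")
  case False
  then consider "\<not> (\<exists>x\<in>A. x < s)" | a b where "a \<in> A" "b \<in> A" "s = sup a b" "s \<noteq> a" "s \<noteq> b"
    using assms(2) unfolding join_irreducibles_def by blast
  then show ?thesis
  proof cases
    case 1
    have "s \<le> a" if "a \<in> A" for a
    proof -
      have "inf s a \<in> A" using assms that unfolding lat_closed_def by blast
      then have "inf s a = s" using 1 by (metis inf.cobounded1 order.order_iff_strict)
      then show ?thesis by (metis inf.cobounded2)
    qed
    then show ?thesis using least by blast
  next
    case 2
    then show ?thesis
      using join by (metis sup.cobounded1 sup.cobounded2 order.not_eq_order_implies_strict)
  qed
qed (rule join_irreducible)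

lemma lower_cover_strictly_below:
  fixes A :: "'a::lattice set"
  assumes fin: "finite A" and cl: "lat_closed A" and s: "s \<in> join_irreducibles A"
  shows "lower_cover A s \<in> A" and "lower_cover A s < s"
proof -
  let ?L = "{a \<in> A. a < s}"
  have "?L \<noteq> {}" using s by (auto simp: join_irreducibles_def)
  then obtain m where m: "m \<in> A" "m < s" and m_max: "\<forall>b\<in>?L. m \<le> b \<longrightarrow> m = b"
    using finite_has_maximal[of ?L] fin by auto
  have greatest: "a \<le> m" if a: "a \<in> A" "a < s" for a
  proof -
    have "sup a m \<noteq> s"
    proof
      assume "sup a m = s"
      then have "s = a \<or> s = m" using s a m unfolding join_irreducibles_def by blast
      then show False using a m by auto
    qed
    then have "sup a m < s" using a m by (simp add: order.strict_iff_order)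
    moreover have "sup a m \<in> A" using cl a m unfolding lat_closed_def by blast
    ultimately have "m = sup a m" using m_max by simp
    then show "a \<le> m" by (metis sup.cobounded1)
  qed
  have "lower_cover A s = m" unfolding lower_cover_def
  proof (rule the_equality)
    show "m \<in> A \<and> m < s \<and> \<not> (\<exists>z\<in>A. m < z \<and> z < s)" using m greatest by force
  next
    fix p assume "p \<in> A \<and> p < s \<and> \<not> (\<exists>z\<in>A. p < z \<and> z < s)"
    then show "p = m" using m greatest by force
  qed
  then show "lower_cover A s \<in> A" "lower_cover A s < s" using m by auto
qed

definition join_dep_closed :: "'a::lattice set \<Rightarrow> 'a set \<Rightarrow> bool" where
  "join_dep_closed A P \<longleftrightarrow> (\<forall>q\<in>P. \<forall>i. (i, q) \<in> join_dep A \<longrightarrow> i \<in> P)"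

lemma join_dep_closed_rtrancl: "join_dep_closed A {i. \<exists>p\<in>P. (i, p) \<in> (join_dep A)\<^sup>*}"
  unfolding join_dep_closed_def by (blast intro: converse_rtrancl_into_rtrancl)

lemma join_dep_closed_le_sup:
  fixes A :: "'a::lattice set"
  assumes fin: "finite A" and cl: "lat_closed A" and P: "join_dep_closed A P"
    and j: "j \<in> join_irreducibles A - P"
    and "s \<in> A" and "w \<in> A"
    and "\<forall>i\<in>join_irreducibles A - P. i \<le> s \<longrightarrow> i \<le> w"
    and "j \<le> sup s w"
  shows "j \<le> w"
  using fin \<open>s \<in> A\<close> assms(6-)
proof (induction s arbitrary: w rule: finite_less_induct)
  case (less s)
  from cl \<open>s \<in> A\<close> show ?case
  proof (cases rule: lat_closed_cases)
    case least
    then show ?thesis using less.prems by (simp add: sup_absorb2)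
  next
    case join_irreducible
    show ?thesis
    proof (cases "s \<le> w")
      case True
      then show ?thesis using less.prems by (simp add: sup_absorb2)
    next
      case False
      then have "s \<in> P" using join_irreducible less.prems(2) by auto
      let ?c = "lower_cover A s"
      have c: "?c \<in> A" "?c < s" using lower_cover_strictly_below[OF fin cl join_irreducible] by auto
      \<comment> \<open>As \<open>P\<close> is closed and \<open>j \<notin> P\<close>, \<open>j\<close> does not depend on \<open>s\<close>:
        it stays below the join when \<open>s\<close> is lowered to its cover.\<close>
      have "(j, s) \<notin> join_dep A" using P j \<open>s \<in> P\<close> unfolding join_dep_closed_def by blast
      then have "j \<le> sup ?c w"
        using j join_irreducible less.prems(1,3) \<open>s \<in> P\<close> unfolding join_dep_def by auto
      moreover have "\<forall>i\<in>join_irreducibles A - P. i \<le> ?c \<longrightarrow> i \<le> w"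
        using less.prems(2) c(2) by (meson order.trans less_imp_le)
      ultimately show ?thesis using less.IH[OF c less.prems(1)] by blast
    qed
  next
    case (join a b)
    have "sup b w \<in> A" using cl join less.prems(1) unfolding lat_closed_def by blast
    moreover have "\<forall>i\<in>join_irreducibles A - P. i \<le> a \<longrightarrow> i \<le> sup b w"
      using less.prems(2) join by (meson order.trans less_imp_le le_supI2)
    moreover have "j \<le> sup a (sup b w)" using less.prems(3) join by (simp add: sup_assoc)
    ultimately have "j \<le> sup b w" using less.IH[OF join(1,3)] by blast
    moreover have "\<forall>i\<in>join_irreducibles A - P. i \<le> b \<longrightarrow> i \<le> w"
      using less.prems(2) join by (meson order.trans less_imp_le)
    ultimately show ?thesis using less.IH[OF join(2,4) less.prems(1)] by blast
  qed
qed

definition congruence_on :: "'a::lattice set \<Rightarrow> ('a \<times> 'a) set \<Rightarrow> bool" where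
  "congruence_on A \<theta> \<longleftrightarrow> (\<forall>u\<in>A. (u, u) \<in> \<theta>) \<and> sym \<theta> \<and> trans \<theta> \<and>
     (\<forall>u\<in>A. \<forall>v\<in>A. \<forall>t\<in>A. (u, v) \<in> \<theta> \<longrightarrow> (sup u t, sup v t) \<in> \<theta> \<and> (inf u t, inf v t) \<in> \<theta>)"

lemma congruence_onD:
  assumes "congruence_on A \<theta>"
  shows "u \<in> A \<Longrightarrow> (u, u) \<in> \<theta>"
    and "(u, v) \<in> \<theta> \<Longrightarrow> (v, u) \<in> \<theta>"
    and "(u, v) \<in> \<theta> \<Longrightarrow> (v, w) \<in> \<theta> \<Longrightarrow> (u, w) \<in> \<theta>"
    and "u \<in> A \<Longrightarrow> v \<in> A \<Longrightarrow> t \<in> A \<Longrightarrow> (u, v) \<in> \<theta> \<Longrightarrow> (sup u t, sup v t) \<in> \<theta>"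
    and "u \<in> A \<Longrightarrow> v \<in> A \<Longrightarrow> t \<in> A \<Longrightarrow> (u, v) \<in> \<theta> \<Longrightarrow> (inf u t, inf v t) \<in> \<theta>"
  using assms unfolding congruence_on_def by (blast dest: symD transD)+

text \<open>For \<open>join_dep\<close>-closed \<open>P\<close> this is the congruence of the finite lattice \<open>A\<close>
  associated with \<open>P\<close> in the correspondence between congruences and D-closed sets of
  join-irreducibles.\<close>
definition jirr_congruence :: "'a::lattice set \<Rightarrow> 'a set \<Rightarrow> ('a \<times> 'a) set" where
  "jirr_congruence A P = {(u, v). \<forall>i\<in>join_irreducibles A - P. i \<le> u \<longleftrightarrow> i \<le> v}"

lemma congruence_on_jirr_congruence:
  fixes A :: "'a::lattice set"
  assumes fin: "finite A" and cl: "lat_closed A" and P: "join_dep_closed A P"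
  shows "congruence_on A (jirr_congruence A P)"
proof -
  have sup_mono: "i \<le> sup v t"
    if "u \<in> A" "v \<in> A" "t \<in> A" "(u, v) \<in> jirr_congruence A P"
      and i: "i \<in> join_irreducibles A - P" "i \<le> sup u t" for u v t i
  proof (rule join_dep_closed_le_sup[OF fin cl P i(1) \<open>u \<in> A\<close>])
    show "sup v t \<in> A" using cl that unfolding lat_closed_def by blast
    show "\<forall>i\<in>join_irreducibles A - P. i \<le> u \<longrightarrow> i \<le> sup v t"
      using that(4) unfolding jirr_congruence_def by (auto intro: le_supI1)
    show "i \<le> sup u (sup v t)" using i(2) by (meson order.trans le_sup_iff sup_ge1 sup_ge2)
  qed
  have sym: "(v, u) \<in> jirr_congruence A P" if "(u, v) \<in> jirr_congruence A P" for u v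
    using that unfolding jirr_congruence_def by auto
  show ?thesis unfolding congruence_on_def
  proof (intro conjI ballI impI)
    show "sym (jirr_congruence A P)" using sym by (rule symI)
    show "trans (jirr_congruence A P)" unfolding jirr_congruence_def by (rule transI) blast
    fix u v t assume uvt: "u \<in> A" "v \<in> A" "t \<in> A" and uv: "(u, v) \<in> jirr_congruence A P"
    show "(sup u t, sup v t) \<in> jirr_congruence A P"
      using sup_mono[OF uvt uv] sup_mono[OF uvt(2,1,3) sym[OF uv]]
      unfolding jirr_congruence_def by blast
    show "(inf u t, inf v t) \<in> jirr_congruence A P"
      using uv unfolding jirr_congruence_def by simp
  qed (simp add: jirr_congruence_def)
qed

definition separating :: "'a::lattice set \<Rightarrow> 'a \<Rightarrow> 'a \<Rightarrow> 'a set" where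
  "separating A u v = {j \<in> join_irreducibles A. j \<le> v \<and> \<not> j \<le> u}"

lemma separating_nonempty:
  fixes A :: "'a::lattice set"
  assumes fin: "finite A" and cl: "lat_closed A" and "u \<in> A" and "v \<in> A" and "\<not> v \<le> u"
  shows "separating A u v \<noteq> {}"
  using fin \<open>v \<in> A\<close> \<open>\<not> v \<le> u\<close>
proof (induction v rule: finite_less_induct)
  case (less v)
  from cl \<open>v \<in> A\<close> show ?case
  proof (cases rule: lat_closed_cases)
    case least
    then show ?thesis using \<open>u \<in> A\<close> less.prems by simp
  next
    case join_irreducible
    then have "v \<in> separating A u v" using less.prems unfolding separating_def by simp
    then show ?thesis by blast
  next
    case (join a b)
    have mono: "separating A u c \<subseteq> separating A u v" if "c \<le> v" for c
      using that unfolding separating_def by (auto intro: order.trans)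
    obtain c where c: "c \<in> A" "c < v" "\<not> c \<le> u" using join less.prems by auto
    show ?thesis using less.IH[OF c] mono[OF less_imp_le[OF c(2)]] by blast
  qed
qed

lemma separating_subset_join_dep_rtrancl:
  fixes A :: "'a::lattice set"
  assumes fin: "finite A" and cl: "lat_closed A" and "u \<le> v"
    and forced: "\<And>\<theta>. congruence_on A \<theta> \<Longrightarrow> (u, v) \<in> \<theta> \<Longrightarrow> (u', v') \<in> \<theta>"
  shows "separating A u' v' \<subseteq> {i. \<exists>p\<in>separating A u v. (i, p) \<in> (join_dep A)\<^sup>*}"
proof
  let ?P = "{i. \<exists>p\<in>separating A u v. (i, p) \<in> (join_dep A)\<^sup>*}"
  have "(u, v) \<in> jirr_congruence A ?P"
    using \<open>u \<le> v\<close> unfolding jirr_congruence_def separating_def by (blast intro: order.trans)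
  then have "(u', v') \<in> jirr_congruence A ?P"
    using forced congruence_on_jirr_congruence[OF fin cl join_dep_closed_rtrancl] by blast
  then show "j \<in> ?P" if "j \<in> separating A u' v'" for j
    using that unfolding jirr_congruence_def separating_def by blast
qed

inductive_set principal_congruence :: "'a::lattice \<Rightarrow> 'a \<Rightarrow> ('a \<times> 'a) set" for a b where
  base: "(a, b) \<in> principal_congruence a b"
| refl: "(u, u) \<in> principal_congruence a b"
| sym: "(u, v) \<in> principal_congruence a b \<Longrightarrow> (v, u) \<in> principal_congruence a b"
| trans: "(u, v) \<in> principal_congruence a b \<Longrightarrow> (v, w) \<in> principal_congruence a b \<Longrightarrow>
    (u, w) \<in> principal_congruence a b"
| sup: "(u, v) \<in> principal_congruence a b \<Longrightarrow> (sup u t, sup v t) \<in> principal_congruence a b"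
| inf: "(u, v) \<in> principal_congruence a b \<Longrightarrow> (inf u t, inf v t) \<in> principal_congruence a b"

lemma lattice_congruence_principal_congruence: "lattice_congruence (principal_congruence a b)"
  unfolding lattice_congruence_def
proof (intro conjI allI impI)
  show "equiv UNIV (principal_congruence a b)"
    by (intro equivI refl_onI symI transI) (auto intro: principal_congruence.intros)
  fix u v c d assume "(u, v) \<in> principal_congruence a b \<and> (c, d) \<in> principal_congruence a b"
  then show "(sup u c, sup v d) \<in> principal_congruence a b"
    and "(inf u c, inf v d) \<in> principal_congruence a b"
    by (metis principal_congruence.sup principal_congruence.trans sup_commute,
        metis principal_congruence.inf principal_congruence.trans inf_commute)
qed

lemma simple_lattice_principal_congruence:
  assumes "simple_lattice TYPE('a::lattice)" and "a \<noteq> b"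
  shows "principal_congruence a b = (UNIV :: ('a \<times> 'a) set)"
  using assms lattice_congruence_principal_congruence principal_congruence.base
  unfolding simple_lattice_def by blast

text \<open>The pairs used to derive \<open>(c, d)\<close> from \<open>(a, b)\<close> form a finite set \<open>F\<close>; the
  derivation can be replayed in every congruence of every \<open>A \<supseteq> F\<close>.\<close>
definition forced_within :: "'a::lattice set \<Rightarrow> 'a \<Rightarrow> 'a \<Rightarrow> 'a \<Rightarrow> 'a \<Rightarrow> bool" where
  "forced_within F a b c d \<longleftrightarrow> c \<in> F \<and> d \<in> F \<and>
     (\<forall>A \<theta>. F \<subseteq> A \<longrightarrow> congruence_on A \<theta> \<longrightarrow> (a, b) \<in> \<theta> \<longrightarrow> (c, d) \<in> \<theta>)"

lemma principal_congruence_forced_within: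
  assumes "(c, d) \<in> principal_congruence a b"
  obtains F where "finite F" and "forced_within F a b c d"
  using assms
proof (induction arbitrary: thesis rule: principal_congruence.induct)
  case base
  show ?case by (rule base.prems[of "{a, b}"]) (auto simp: forced_within_def)
next
  case (refl u)
  show ?case by (rule refl.prems[of "{u}"]) (auto simp: forced_within_def dest: congruence_onD(1))
next
  case (sym u v)
  obtain F where "finite F" "forced_within F a b u v" using sym.IH .
  moreover from this(2) have "forced_within F a b v u"
    unfolding forced_within_def by (blast dest: congruence_onD(2))
  ultimately show ?case by (intro sym.prems)
next
  case (trans u v w)
  obtain F where "finite F" and F: "forced_within F a b u v" using trans.IH(1) .
  obtain G where "finite G" and G: "forced_within G a b v w" using trans.IH(2) .
  have "forced_within (F \<union> G) a b u w"
    using F G unfolding forced_within_def by (blast dest: congruence_onD(3))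
  with \<open>finite F\<close> \<open>finite G\<close> show ?case by (intro trans.prems) auto
next
  case (sup u v t)
  obtain F where "finite F" and F: "forced_within F a b u v" using sup.IH .
  have "forced_within (F \<union> {t, sup u t, sup v t}) a b (sup u t) (sup v t)"
    using F unfolding forced_within_def by (blast intro: congruence_onD(4))
  with \<open>finite F\<close> show ?case by (intro sup.prems) auto
next
  case (inf u v t)
  obtain F where "finite F" and F: "forced_within F a b u v" using inf.IH .
  have "forced_within (F \<union> {t, inf u t, inf v t}) a b (inf u t) (inf v t)"
    using F unfolding forced_within_def by (blast intro: congruence_onD(5))
  with \<open>finite F\<close> show ?case by (intro inf.prems) auto
qed

lemma gen_sublattice_lat_closed: "lat_closed (gen_sublattice X)"
  and subset_gen_sublattice: "X \<subseteq> gen_sublattice X"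
  unfolding gen_sublattice_def lat_closed_def by blast+

lemma finite_join_dep: "finite A \<Longrightarrow> finite (join_dep A)"
  by (rule finite_subset[of _ "A \<times> A"]) (auto simp: join_dep_def join_irreducibles_def)

lemma mutually_reachable_not_acyclic:
  assumes "finite r" and "P \<inter> Q = {}" and "P \<noteq> {}"
    and PQ: "P \<subseteq> {i. \<exists>q\<in>Q. (i, q) \<in> r\<^sup>*}" and QP: "Q \<subseteq> {i. \<exists>p\<in>P. (i, p) \<in> r\<^sup>*}"
  shows "\<not> acyclic r"
proof
  assume "acyclic r"
  with \<open>finite r\<close> have "wf ((r\<^sup>+)\<inverse>)"
    by (metis finite_acyclic_wf_converse trancl_converse wf_trancl)
  then obtain m where m: "m \<in> P \<union> Q" and maximal: "\<forall>b. (m, b) \<in> r\<^sup>+ \<longrightarrow> b \<notin> P \<union> Q"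
    using \<open>P \<noteq> {}\<close> unfolding wf_eq_minimal by (metis Un_empty converseI ex_in_conv)
  from m PQ QP obtain b where "b \<in> P \<union> Q" "(m, b) \<in> r\<^sup>*" "m \<noteq> b"
    using \<open>P \<inter> Q = {}\<close> by blast
  then show False using maximal by (simp add: rtrancl_eq_or_trancl)
qed

lemma ex_three_chain:
  fixes a b c :: "'a::lattice"
  assumes "a \<noteq> b" and "a \<noteq> c" and "b \<noteq> c"
  obtains x y z :: 'a where "x < y" and "y < z"
proof (cases "(a \<le> b \<or> b \<le> a) \<and> (a \<le> c \<or> c \<le> a) \<and> (b \<le> c \<or> c \<le> b)")
  case True
  then have "(a < b \<or> b < a) \<and> (a < c \<or> c < a) \<and> (b < c \<or> c < b)"
    using assms by (simp add: order.order_iff_strict)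
  then show ?thesis using that by blast
next
  case False
  then obtain u v :: 'a where "\<not> u \<le> v" "\<not> v \<le> u" by blast
  then have "inf u v < u" "u < sup u v"
    by (metis inf.absorb_iff1 inf.cobounded1 order.strict_iff_order,
        metis sup.absorb_iff1 sup.cobounded1 order.strict_iff_order)
  then show ?thesis using that by blast
qed

lemma mutually_forced_chain_not_acyclic:
  fixes A :: "'a::lattice set"
  assumes fin: "finite A" and cl: "lat_closed A" and "x \<in> A" "y \<in> A" "x < y" "y < z"
    and forced_yz: "\<And>\<theta>. congruence_on A \<theta> \<Longrightarrow> (x, y) \<in> \<theta> \<Longrightarrow> (y, z) \<in> \<theta>"
    and forced_xy: "\<And>\<theta>. congruence_on A \<theta> \<Longrightarrow> (y, z) \<in> \<theta> \<Longrightarrow> (x, y) \<in> \<theta>"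
  shows "\<not> acyclic (join_dep A)"
proof (rule mutually_reachable_not_acyclic[OF finite_join_dep[OF fin]])
  show "separating A x y \<inter> separating A y z = {}" unfolding separating_def by blast
  show "separating A x y \<noteq> {}"
    using separating_nonempty[OF fin cl \<open>x \<in> A\<close> \<open>y \<in> A\<close>] \<open>x < y\<close> by simp
  show "separating A x y \<subseteq> {i. \<exists>q\<in>separating A y z. (i, q) \<in> (join_dep A)\<^sup>*}"
    using \<open>y < z\<close> by (intro separating_subset_join_dep_rtrancl[OF fin cl _ forced_xy]) simp
  show "separating A y z \<subseteq> {i. \<exists>p\<in>separating A x y. (i, p) \<in> (join_dep A)\<^sup>*}"
    using \<open>x < y\<close> by (intro separating_subset_join_dep_rtrancl[OF fin cl _ forced_yz]) simp
qed

theorem theorem6p1: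
  assumes "simple_lattice TYPE('a::lattice)"
    and "locally_finite_lattice TYPE('a)"
    and "\<exists>a b c :: 'a. a \<noteq> b \<and> a \<noteq> c \<and> b \<noteq> c"
    and "\<forall>A :: 'a set. finite A \<and> sublattice A \<longrightarrow> T_join A"
  shows False
proof -
  obtain x y z :: 'a where "x < y" "y < z" using assms(3) ex_three_chain by blast
  then have "(y, z) \<in> principal_congruence x y" "(x, y) \<in> principal_congruence y z"
    using simple_lattice_principal_congruence[OF assms(1)] by auto
  then obtain F G where F: "finite F" "forced_within F x y y z"
    and G: "finite G" "forced_within G y z x y"
    using principal_congruence_forced_within by metis
  define A where "A = gen_sublattice (F \<union> G)"
  have fin: "finite A"
    using assms(2) F(1) G(1) unfolding A_def locally_finite_lattice_def by blast
  have cl: "lat_closed A" unfolding A_def by (rule gen_sublattice_lat_closed)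
  have "F \<subseteq> A" "G \<subseteq> A" using subset_gen_sublattice unfolding A_def by blast+
  with F(2) G(2) have "x \<in> A" "y \<in> A"
    and "\<And>\<theta>. congruence_on A \<theta> \<Longrightarrow> (x, y) \<in> \<theta> \<Longrightarrow> (y, z) \<in> \<theta>"
    and "\<And>\<theta>. congruence_on A \<theta> \<Longrightarrow> (y, z) \<in> \<theta> \<Longrightarrow> (x, y) \<in> \<theta>"
    unfolding forced_within_def by (auto; blast)+
  then have "\<not> acyclic (join_dep A)"
    using mutually_forced_chain_not_acyclic[OF fin cl] \<open>x < y\<close> \<open>y < z\<close> by blast
  moreover have "sublattice A" using cl \<open>x \<in> A\<close> unfolding sublattice_def by blast
  ultimately show False using assms(4) fin unfolding T_join_def by blast
qed

end
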